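(* Let $n\in\mathbb{N}_0$ and let $p\in\mathbb{N}_0$ with $p\ge n$. Let $\psi_{p,n}$ denote the $n$-th primitive of the Legendre polynomial $L_p$. Then \[ \int_{-1}^1\psi_{p,n}(x)^2\,dx=\frac{2^{n+1}}{n!}\,\frac{1}{2p+1}\prod_{k=1}^n\frac{2k-1}{(2p+1)^2-4k^2}. \]
   Context: $L_j$ denotes the Legendre polynomial of degree $j$ on $(-1,1)$, normalized so that $L_j(1)=1$ and $\int_{-1}^1L_iL_j=\frac{2}{2i+1}\delta_{ij}$. The $n$-th primitive is defined recursively by $\psi_{i,0}:=L_i$ and $\psi_{i,n}(x):=\int_{-1}^x\psi_{i,n-1}(\zeta)\,d\zeta$ for $n\ge1$. *)

theory Defs
  imports "HOL-Analysis.Analysis"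
begin

fun legendre :: "nat \<Rightarrow> real \<Rightarrow> real" where
  "legendre 0 x = 1"
| "legendre (Suc 0) x = x"
| "legendre (Suc (Suc j)) x =
     ((2 * real j + 3) * x * legendre (Suc j) x - (real j + 1) * legendre j x) / (real j + 2)"

fun psi :: "nat \<Rightarrow> nat \<Rightarrow> real \<Rightarrow> real" where
  "psi i 0 = legendre i"
| "psi i (Suc n) = (\<lambda>x. integral {-1..x} (psi i n))"

end

theory Submission
  imports Defs
begin

(* Extend the Legendre polynomials to integer indices by L_{-q-1} = -L_q. Then
   (2q+1) L_q integrates to L_{q+1} - L_{q-1} for every integer q, so by induction psi_{p,m} is an
   explicit combination of L_{p-m}, L_{p-m+2}, ..., L_{p+m}, whose coefficients are signed binomial
   coefficients divided by products of consecutive odd numbers. Since psi_{p,k} vanishes at both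
   endpoints for 1 <= k <= p, integrating by parts n times turns the integral of psi_{p,n}^2 into
   (-1)^n times the integral of L_p psi_{p,2n}, and by orthogonality only the L_p-coefficient of
   psi_{p,2n} survives. That coefficient is (-1)^n binom(2n,n) (2p+1) divided by the product of the
   odd numbers 2p+1-2n, ..., 2p+1+2n, which regroups into the stated product. *)

lemma fundamental_theorem_of_calculus_DERIV:
  fixes F f :: "real \<Rightarrow> real"
  assumes "a \<le> b" "\<And>x. (F has_real_derivative f x) (at x)"
  shows "(f has_integral (F b - F a)) {a..b}"
  using assms by (intro fundamental_theorem_of_calculus)
    (auto simp flip: has_real_derivative_iff_has_vector_derivative intro: has_field_derivative_at_within)

section \<open>Derivatives and orthogonality of Legendre polynomials\<close>

fun legendre_der :: "nat \<Rightarrow> real \<Rightarrow> real" where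
  "legendre_der 0 x = 0"
| "legendre_der (Suc 0) x = 1"
| "legendre_der (Suc (Suc j)) x =
     ((2 * real j + 3) * (legendre (Suc j) x + x * legendre_der (Suc j) x)
        - (real j + 1) * legendre_der j x) / (real j + 2)"

lemma DERIV_legendre: "(legendre q has_real_derivative legendre_der q x) (at x)"
proof (induction q x rule: legendre.induct)
  case (3 j x)
  have "((\<lambda>x. (2 * real j + 3) * x * legendre (Suc j) x - (real j + 1) * legendre j x)
      has_real_derivative (2 * real j + 3) * (legendre (Suc j) x + x * legendre_der (Suc j) x)
        - (real j + 1) * legendre_der j x) (at x)"
    by (rule derivative_eq_intros refl 3 | simp add: algebra_simps)+
  from DERIV_cdivide[OF this, of "real j + 2"] show ?case by simp
qed (auto intro!: derivative_eq_intros)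

lemma continuous_on_legendre: "continuous_on S (legendre q)"
  by (meson DERIV_isCont continuous_at_imp_continuous_on DERIV_legendre)

(* At q = 0 the truncated q - 1 is harmless: its coefficient real q vanishes. *)
lemma legendre_bonnet:
  "(real q + 1) * legendre (Suc q) x = (2 * real q + 1) * x * legendre q x - real q * legendre (q - 1) x"
  by (cases q) (simp_all add: field_simps)

lemma legendre_der_recurrences:
  "legendre_der (Suc q) x = x * legendre_der q x + (real q + 1) * legendre q x \<and>
   (x\<^sup>2 - 1) * legendre_der q x = real q * (x * legendre q x - legendre (q - 1) x)"
proof (induction q)
  case (Suc q)
  then have IH1: "legendre_der (Suc q) x = x * legendre_der q x + (real q + 1) * legendre q x"
    and IH2: "(x\<^sup>2 - 1) * legendre_der q x = real q * (x * legendre q x - legendre (q - 1) x)"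
    by blast+
  note bonnet = legendre_bonnet[of q x]
  have pred: "x * legendre_der (Suc q) x - legendre_der q x = (real q + 1) * legendre (Suc q) x"
    using IH1 IH2 bonnet by (simp add: algebra_simps power2_eq_square)
  have "(real q + 2) * legendre_der (Suc (Suc q)) x
      = (2 * real q + 3) * (legendre (Suc q) x + x * legendre_der (Suc q) x)
          - (real q + 1) * legendre_der q x"
    by simp
  also have "\<dots> = (real q + 2) * (x * legendre_der (Suc q) x + (real (Suc q) + 1) * legendre (Suc q) x)"
    using pred by (simp add: algebra_simps)
  finally have "legendre_der (Suc (Suc q)) x
      = x * legendre_der (Suc q) x + (real (Suc q) + 1) * legendre (Suc q) x"
    by simp
  moreover have "(x\<^sup>2 - 1) * legendre_der (Suc q) x
      = real (Suc q) * (x * legendre (Suc q) x - legendre (Suc q - 1) x)"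
    using IH1 IH2 bonnet by simp algebra
  ultimately show ?case by simp
qed simp

lemmas legendre_der_Suc = legendre_der_recurrences[THEN conjunct1]
lemmas sq_minus_one_mult_legendre_der = legendre_der_recurrences[THEN conjunct2]

lemma legendre_der_pred: "x * legendre_der q x - legendre_der (q - 1) x = real q * legendre q x"
proof (cases q)
  case (Suc j)
  then show ?thesis
    using legendre_der_Suc[where q=j and x=x] sq_minus_one_mult_legendre_der[where q=j and x=x]
      legendre_bonnet[of j x]
    by (simp add: algebra_simps power2_eq_square)
qed simp

lemma legendre_der_diff:
  "legendre_der (Suc q) x - legendre_der (q - 1) x = (2 * real q + 1) * legendre q x"
  using legendre_der_Suc[where q=q and x=x] legendre_der_pred[where q=q and x=x] by (simp add: algebra_simps)

lemma legendre_at_1: "legendre q 1 = 1"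
proof -
  have "legendre q 1 = 1 \<and> legendre (Suc q) 1 = 1"
    by (induction q) (simp_all add: field_simps)
  then show ?thesis ..
qed

lemma legendre_at_minus_1: "legendre q (-1) = (-1) ^ q"
proof -
  have "legendre q (-1) = (-1) ^ q \<and> legendre (Suc q) (-1) = (-1) ^ Suc q"
    by (induction q) (simp_all add: field_simps)
  then show ?thesis ..
qed

lemma legendre_orthogonal:
  assumes "q \<noteq> r"
  shows "integral {-1..1} (\<lambda>x. legendre q x * legendre r x) = 0"
proof -
  define c where "c = real r * (real r + 1) - real q * (real q + 1)"
  have "c \<noteq> 0"
  proof
    assume "c = 0"
    then have "(real r - real q) * (real r + real q + 1) = 0"
      by (simp add: c_def algebra_simps)
    then show False using assms by simp
  qed
  define W where "W x = real q * (legendre (q - 1) x - x * legendre q x) * legendre r x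
      - real r * (legendre (r - 1) x - x * legendre r x) * legendre q x" for x
  \<comment> \<open>W = (1 - x^2)(L_q' L_r - L_r' L_q); the Legendre equation makes its derivative c L_q L_r.\<close>
  have "(W has_real_derivative c * (legendre q x * legendre r x)) (at x)" for x
  proof -
    note der = legendre_der_pred[where q=q and x=x] legendre_der_pred[where q=r and x=x]
      sq_minus_one_mult_legendre_der[where q=q and x=x] sq_minus_one_mult_legendre_der[where q=r and x=x]
    show ?thesis
      unfolding W_def[abs_def] c_def
      by (rule derivative_eq_intros DERIV_legendre refl)+ (use der in algebra)
  qed
  then have "((\<lambda>x. c * (legendre q x * legendre r x)) has_integral W 1 - W (-1)) {-1..1}"
    by (intro fundamental_theorem_of_calculus_DERIV) auto
  then have "integral {-1..1} (\<lambda>x. c * (legendre q x * legendre r x)) = W 1 - W (-1)"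
    by (rule integral_unique)
  moreover have "W 1 = 0"
    by (simp add: W_def legendre_at_1)
  moreover have "real k * (legendre (k - 1) (-1) + legendre k (-1)) = 0" for k
    by (cases k) (auto simp: legendre_at_minus_1)
  then have "W (-1) = 0"
    by (simp add: W_def algebra_simps)
  ultimately have "c * integral {-1..1} (\<lambda>x. legendre q x * legendre r x) = 0"
    by simp
  with \<open>c \<noteq> 0\<close> show ?thesis by simp
qed

lemma integral_legendre_sq:
  "integral {-1..1} (\<lambda>x. legendre q x * legendre q x) = 2 / (2 * real q + 1)"
proof (induction q)
  case (Suc q)
  define N where "N k = integral {-1..1} (\<lambda>x. legendre k x * legendre k x)" for k
  define X where "X = integral {-1..1} (\<lambda>x. x * legendre q x * legendre (Suc q) x)"
  have "(real q + 1) * N (Suc q)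
      = integral {-1..1} (\<lambda>x. (2 * real q + 1) * (x * legendre q x * legendre (Suc q) x)
          - real q * (1 * legendre (q - 1) x * legendre (Suc q) x))"
    unfolding N_def integral_mult_right[symmetric]
    by (rule integral_cong) (subst mult.assoc[symmetric], subst legendre_bonnet, simp add: algebra_simps)
  also have "\<dots> = (2 * real q + 1) * X"
    using legendre_orthogonal[of "q - 1" "Suc q"]
    by (subst integral_diff) (auto intro!: integrable_continuous_interval continuous_intros
        continuous_on_legendre simp: X_def)
  finally have e1: "(real q + 1) * N (Suc q) = (2 * real q + 1) * X" .
  have "0 = integral {-1..1} (\<lambda>x. ((real (Suc q) + 1) * legendre (Suc (Suc q)) x) * legendre q x)"
    using legendre_orthogonal[of "Suc (Suc q)" q] by (simp add: mult.assoc del: legendre.simps)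
  also have "\<dots> = integral {-1..1} (\<lambda>x. (2 * real q + 3) * (x * legendre q x * legendre (Suc q) x)
      - (real q + 1) * (1 * legendre q x * legendre q x))"
    by (rule integral_cong) (subst legendre_bonnet[of "Suc q"], simp add: algebra_simps)
  also have "\<dots> = (2 * real q + 3) * X - (real q + 1) * N q"
    by (subst integral_diff) (auto intro!: integrable_continuous_interval continuous_intros
        continuous_on_legendre simp: X_def N_def)
  finally have e2: "(2 * real q + 3) * X = (real q + 1) * N q" by simp
  have "X = (real q + 1) * N q / (2 * real q + 3)"
    using e2 by (simp add: field_simps)
  with e1 have "(real q + 1) * N (Suc q) = (real q + 1) * ((2 * real q + 1) * N q) / (2 * real q + 3)"
    by (simp add: mult.left_commute)
  also have "(2 * real q + 1) * N q = 2"
    using Suc.IH by (simp add: N_def field_simps)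
  finally have "(real q + 1) * N (Suc q) = (real q + 1) * (2 / (2 * real q + 3))"
    by simp
  then have "N (Suc q) = 2 / (2 * real q + 3)"
    by (subst (asm) mult_cancel_left) simp
  then show ?case by (simp add: N_def add.commute)
qed simp

section \<open>Legendre polynomials of integer index\<close>

(* The reflection L_{-q-1} = -L_q is chosen so that (2q+1) L_q integrates to L_{q+1} - L_{q-1}
   for every integer q, including q = 0 (has_integral_legendre_int). *)
definition legendre_int :: "int \<Rightarrow> real \<Rightarrow> real" where
  "legendre_int q x = (if 0 \<le> q then legendre (nat q) x else - legendre (nat (- q - 1)) x)"

definition legendre_int_der :: "int \<Rightarrow> real \<Rightarrow> real" where
  "legendre_int_der q x = (if 0 \<le> q then legendre_der (nat q) x else - legendre_der (nat (- q - 1)) x)"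

lemma DERIV_legendre_int: "(legendre_int q has_real_derivative legendre_int_der q x) (at x)"
  unfolding legendre_int_def[abs_def] legendre_int_der_def
  by (cases "0 \<le> q") (auto intro!: derivative_eq_intros DERIV_legendre)

lemma continuous_on_legendre_int: "continuous_on S (legendre_int q)"
  by (meson DERIV_isCont continuous_at_imp_continuous_on DERIV_legendre_int)

lemma legendre_int_der_diff:
  "legendre_int_der (q + 1) x - legendre_int_der (q - 1) x = (2 * of_int q + 1) * legendre_int q x"
proof (cases "0 \<le> q")
  case True
  then obtain k where k: "q = int k"
    using nonneg_int_cases by blast
  then have "nat (q + 1) = Suc k"
    by simp
  with k show ?thesis
    using legendre_der_diff[of k x]
    by (cases "k = 0") (simp_all add: legendre_int_def legendre_int_der_def nat_diff_distrib')
next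
  case False
  then obtain r where q: "q = - int r - 1"
    by (intro that[of "nat (- q - 1)"]) simp
  have "nat (int r - 1) = r - 1" "nat (int r + 1) = Suc r"
    by simp_all
  then show ?thesis
    unfolding q using legendre_der_diff[of r x]
    by (cases "r = 0") (simp_all add: legendre_int_def legendre_int_der_def algebra_simps)
qed

lemma legendre_int_at_1: "legendre_int q 1 = (if 0 \<le> q then 1 else -1)"
  by (simp add: legendre_int_def legendre_at_1)

lemma legendre_int_at_minus_1: "legendre_int q (-1) = (if even q then 1 else -1)"
proof (cases "0 \<le> q")
  case True
  then obtain k where "q = int k"
    using nonneg_int_cases by blast
  then show ?thesis
    by (simp add: legendre_int_def legendre_at_minus_1 minus_one_power_iff)
next
  case False
  then obtain r where "q = - int r - 1"
    by (intro that[of "nat (- q - 1)"]) simp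
  then show ?thesis
    by (simp add: legendre_int_def legendre_at_minus_1 minus_one_power_iff even_minus)
qed

lemma has_integral_legendre_int:
  assumes "-1 \<le> x"
  shows "((\<lambda>t. (2 * of_int q + 1) * legendre_int q t) has_integral
    legendre_int (q + 1) x - legendre_int (q - 1) x) {-1..x}"
proof -
  have "((\<lambda>t. legendre_int (q + 1) t - legendre_int (q - 1) t)
      has_real_derivative (2 * of_int q + 1) * legendre_int q t) (at t)" for t
    using DERIV_diff[OF DERIV_legendre_int DERIV_legendre_int] legendre_int_der_diff by metis
  from fundamental_theorem_of_calculus_DERIV[OF assms this]
  show ?thesis
    by (simp add: legendre_int_at_minus_1)
qed

lemma integral_legendre_mult_legendre_int:
  assumes "k \<noteq> - int p - 1"
  shows "integral {-1..1} (\<lambda>x. legendre p x * legendre_int k x) =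
    (if k = int p then 2 / (2 * real p + 1) else 0)"
proof (cases "0 \<le> k")
  case True
  then obtain r where "k = int r"
    using nonneg_int_cases by blast
  then show ?thesis
    using integral_legendre_sq[of p] legendre_orthogonal[of p r] by (simp add: legendre_int_def)
next
  case False
  then obtain r where k: "k = - int r - 1"
    by (intro that[of "nat (- k - 1)"]) simp
  with assms have "r \<noteq> p"
    by simp
  with k show ?thesis
    using legendre_orthogonal[of p r] by (simp add: legendre_int_def)
qed

section \<open>Explicit form of the primitives\<close>

lemma odd_of_int_neq_zero: "2 * (of_int z :: real) + 1 \<noteq> 0"
proof
  assume "2 * (of_int z :: real) + 1 = 0"
  then have "of_int (2 * z + 1) = (0 :: real)"
    by simp
  then show False
    by presburger
qed

definition odd_prod :: "int \<Rightarrow> nat \<Rightarrow> real" where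
  "odd_prod z m = (\<Prod>i=0..m. 2 * of_int (z + int i) + 1)"

lemma odd_prod_neq_zero: "odd_prod z m \<noteq> 0"
  by (simp add: odd_prod_def odd_of_int_neq_zero del: of_int_add)

lemma odd_prod_Suc: "odd_prod z (Suc m) = odd_prod z m * (2 * of_int (z + int m + 1) + 1)"
  by (simp add: odd_prod_def add.assoc)

lemma odd_prod_Suc_shift: "odd_prod (z - 1) (Suc m) = (2 * of_int (z - 1) + 1) * odd_prod z m"
  unfolding odd_prod_def by (subst prod.atLeast0_atMost_Suc_shift) (simp add: algebra_simps)

definition primitive_coeff :: "int \<Rightarrow> nat \<Rightarrow> nat \<Rightarrow> real" where
  "primitive_coeff q m j = (-1) ^ (m - j) * real (m choose j) / odd_prod (q - int m + int j) m"

lemma weighted_pascal: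
  "(2 * (a + real (Suc i)) + 1) * real (Suc m choose Suc i) =
    real (m choose i) * (2 * (a + real m + 1) + 1) + real (m choose Suc i) * (2 * a + 1)"
proof -
  have "real (Suc i) * real (Suc m choose Suc i) = real (Suc m) * real (m choose i)"
    by (metis Suc_times_binomial_eq of_nat_mult mult.commute)
  then show ?thesis
    by (simp add: algebra_simps)
qed

lemma primitive_coeff_Suc_Suc:
  assumes "i < m"
  shows "(2 * of_int (q - int (Suc m) + 2 * int (Suc i)) + 1) * primitive_coeff q (Suc m) (Suc i) =
    primitive_coeff q m i - primitive_coeff q m (Suc i)"
proof -
  define a where "a = q - int m + int i"
  define u where "u = 2 * (of_int a :: real) + 1"
  define v where "v = 2 * (of_int a + real m + 1) + (1 :: real)"
  define s :: real where "s = (-1) ^ (m - i)"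
  define P where "P = odd_prod a (Suc m)"
  have "u \<noteq> 0" "v \<noteq> 0" "P \<noteq> 0"
    using odd_of_int_neq_zero[of a] odd_of_int_neq_zero[of "a + int m + 1"] odd_prod_neq_zero[of a "Suc m"]
    by (simp_all add: u_def v_def P_def)
  have prod_a: "odd_prod a m = P / v"
    using odd_prod_Suc[of a m] \<open>v \<noteq> 0\<close> by (simp add: P_def v_def add.assoc)
  have prod_a1: "odd_prod (a + 1) m = P / u"
    using odd_prod_Suc_shift[of "a + 1" m] \<open>u \<noteq> 0\<close> by (simp add: P_def u_def)
  have "Suc m - Suc i = m - i" "m - i = Suc (m - Suc i)"
    using assms by simp_all
  then have sign: "(-1 :: real) ^ (Suc m - Suc i) = s" "(-1 :: real) ^ (m - Suc i) = - s"
    by (simp_all add: s_def)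
  have idx: "q - int (Suc m) + int (Suc i) = a" "q - int m + int (Suc i) = a + 1"
    "2 * of_int (q - int (Suc m) + 2 * int (Suc i)) + 1 = 2 * (of_int a + real (Suc i)) + (1 :: real)"
    by (simp_all add: a_def)
  have "primitive_coeff q m i - primitive_coeff q m (Suc i)
      = s * real (m choose i) / odd_prod a m + s * real (m choose Suc i) / odd_prod (a + 1) m"
    unfolding primitive_coeff_def a_def[symmetric] s_def[symmetric] idx(2) sign(2) by simp
  also have "\<dots> = s * (real (m choose i) * v + real (m choose Suc i) * u) / P"
    unfolding prod_a prod_a1 using \<open>P \<noteq> 0\<close> \<open>u \<noteq> 0\<close> \<open>v \<noteq> 0\<close> by (simp add: field_simps)
  also have "\<dots> = (2 * of_int (q - int (Suc m) + 2 * int (Suc i)) + 1) *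
      primitive_coeff q (Suc m) (Suc i)"
    unfolding primitive_coeff_def idx sign u_def v_def weighted_pascal[symmetric] P_def by simp
  finally show ?thesis ..
qed

lemma primitive_coeff_Suc:
  assumes "j \<le> Suc m"
  shows "(2 * of_int (q - int (Suc m) + 2 * int j) + 1) * primitive_coeff q (Suc m) j =
    (if 1 \<le> j then primitive_coeff q m (j - 1) else 0) - (if j \<le> m then primitive_coeff q m j else 0)"
proof -
  consider "j = 0" | "j = Suc m" | i where "j = Suc i" "i < m"
    using assms by (cases j) (auto simp: le_less)
  then show ?thesis
  proof cases
    case 1
    define a where "a = q - int m"
    have shift: "q - int (Suc m) = a - 1"
      by (simp add: a_def)
    show ?thesis
      unfolding 1 primitive_coeff_def shift a_def[symmetric]
      using odd_of_int_neq_zero[of "a - 1"] odd_prod_neq_zero[of a m]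
      by (simp add: odd_prod_Suc_shift del: of_int_diff)
  next
    case 2
    have shift: "q - int (Suc m) + 2 * int (Suc m) = q + int m + 1"
      by simp
    show ?thesis
      unfolding 2 primitive_coeff_def shift
      using odd_of_int_neq_zero[of "q + int m + 1"] odd_prod_neq_zero[of q m]
      by (simp add: odd_prod_Suc del: of_int_add)
  next
    case 3
    then show ?thesis
      using primitive_coeff_Suc_Suc[of i m q] by simp
  qed
qed

lemma sum_mult_diff_Suc:
  fixes a f :: "nat \<Rightarrow> 'a::comm_ring"
  shows "(\<Sum>j=0..m. a j * (f (Suc j) - f j)) =
    (\<Sum>j=0..Suc m. ((if 1 \<le> j then a (j - 1) else 0) - (if j \<le> m then a j else 0)) * f j)"
proof -
  have "(\<Sum>j=0..Suc m. (if 1 \<le> j then a (j - 1) else 0) * f j) = (\<Sum>j=0..m. a j * f (Suc j))"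
    by (subst sum.atLeast0_atMost_Suc_shift) simp
  moreover have "(\<Sum>j=0..Suc m. (if j \<le> m then a j else 0) * f j) = (\<Sum>j=0..m. a j * f j)"
    by (subst sum.atLeast0_atMost_Suc) simp
  ultimately show ?thesis
    by (simp add: left_diff_distrib right_diff_distrib sum_subtractf)
qed

definition primitive_sum :: "int \<Rightarrow> nat \<Rightarrow> real \<Rightarrow> real" where
  "primitive_sum q m x = (\<Sum>j=0..m. primitive_coeff q m j *
    ((2 * of_int (q - int m + 2 * int j) + 1) * legendre_int (q - int m + 2 * int j) x))"

lemma continuous_on_primitive_sum: "continuous_on S (primitive_sum q m)"
  unfolding primitive_sum_def by (intro continuous_intros continuous_on_legendre_int)

lemma integral_primitive_sum_diff:
  assumes "-1 \<le> x"
  shows "integral {-1..x} (primitive_sum q m) = (\<Sum>j=0..m. primitive_coeff q m j *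
    (legendre_int (q - int m + 2 * int j + 1) x - legendre_int (q - int m + 2 * int j - 1) x))"
  unfolding primitive_sum_def
  by (intro integral_unique has_integral_sum assms ballI has_integral_mult_right
      has_integral_legendre_int finite_atLeastAtMost)

lemma integral_primitive_sum:
  assumes "-1 \<le> x"
  shows "integral {-1..x} (primitive_sum q m) = primitive_sum q (Suc m) x"
proof -
  define k where "k j = q - int (Suc m) + 2 * int j" for j
  define d where "d j = (if 1 \<le> j then primitive_coeff q m (j - 1) else 0)
      - (if j \<le> m then primitive_coeff q m j else 0)" for j
  have "integral {-1..x} (primitive_sum q m)
      = (\<Sum>j=0..m. primitive_coeff q m j * (legendre_int (k (Suc j)) x - legendre_int (k j) x))"
    by (simp add: integral_primitive_sum_diff assms k_def algebra_simps)
  also have "\<dots> = (\<Sum>j=0..Suc m. d j * legendre_int (k j) x)"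
    unfolding d_def by (rule sum_mult_diff_Suc)
  also have "\<dots> = (\<Sum>j=0..Suc m. primitive_coeff q (Suc m) j *
      ((2 * of_int (k j) + 1) * legendre_int (k j) x))"
  proof (rule sum.cong)
    fix j assume "j \<in> {0..Suc m}"
    then have "d j = (2 * of_int (k j) + 1) * primitive_coeff q (Suc m) j"
      unfolding d_def k_def by (intro primitive_coeff_Suc[symmetric]) simp
    then show "d j * legendre_int (k j) x
        = primitive_coeff q (Suc m) j * ((2 * of_int (k j) + 1) * legendre_int (k j) x)"
      by simp
  qed simp
  finally show ?thesis
    by (simp add: primitive_sum_def k_def)
qed

lemma integral_primitive_sum_eq_0:
  assumes "int m < q"
  shows "integral {-1..1} (primitive_sum q m) = 0"
  using assms by (simp add: integral_primitive_sum_diff legendre_int_at_1)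

lemma psi_eq_primitive_sum: "-1 \<le> x \<Longrightarrow> psi p m x = primitive_sum (int p) m x"
proof (induction m arbitrary: x)
  case (Suc m)
  then have "psi p (Suc m) x = integral {-1..x} (primitive_sum (int p) m)"
    by (simp, intro integral_cong) simp
  with Suc.prems show ?case
    by (simp add: integral_primitive_sum)
qed (simp add: primitive_sum_def primitive_coeff_def odd_prod_def legendre_int_def)

declare psi.simps(2) [simp del]

lemma continuous_on_psi: "continuous_on {-1..1} (psi p m)"
  using continuous_on_primitive_sum
  by (rule continuous_on_cong[THEN iffD1, rotated 2]) (auto simp: psi_eq_primitive_sum)

lemma DERIV_psi_Suc:
  "x \<in> {-1..1} \<Longrightarrow> (psi p (Suc m) has_real_derivative psi p m x) (at x within {-1..1})"
  unfolding psi.simps by (rule integral_has_real_derivative[OF continuous_on_psi])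

lemma psi_Suc_at_1:
  assumes "m < p"
  shows "psi p (Suc m) 1 = 0"
proof -
  have "psi p (Suc m) 1 = integral {-1..1} (primitive_sum (int p) m)"
    unfolding psi.simps(2) by (rule integral_cong) (simp add: psi_eq_primitive_sum)
  with assms show ?thesis
    by (simp add: integral_primitive_sum_eq_0)
qed

section \<open>Integration by parts and the closed form\<close>

lemma integral_psi_Suc_mult_psi:
  assumes "m < p"
  shows "integral {-1..1} (\<lambda>x. psi p (Suc m) x * psi p r x) =
    - integral {-1..1} (\<lambda>x. psi p m x * psi p (Suc r) x)"
proof -
  define F where "F x = psi p (Suc m) x * psi p (Suc r) x" for x
  have "((\<lambda>x. psi p m x * psi p (Suc r) x + psi p (Suc m) x * psi p r x)
      has_integral F 1 - F (-1)) {-1..1}"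
  proof (rule fundamental_theorem_of_calculus)
    fix x :: real assume "x \<in> {-1..1}"
    then show "(F has_vector_derivative psi p m x * psi p (Suc r) x + psi p (Suc m) x * psi p r x)
        (at x within {-1..1})"
      unfolding F_def has_real_derivative_iff_has_vector_derivative[symmetric]
      using DERIV_mult[OF DERIV_psi_Suc DERIV_psi_Suc] by (simp add: mult.commute)
  qed simp
  moreover have "F 1 = 0" "F (-1) = 0"
    using psi_Suc_at_1[OF assms] by (simp_all add: F_def psi.simps(2))
  ultimately have
    "integral {-1..1} (\<lambda>x. psi p m x * psi p (Suc r) x + psi p (Suc m) x * psi p r x) = 0"
    by (simp add: integral_unique)
  moreover have "(\<lambda>x. psi p a x * psi p b x) integrable_on {-1..1}" for a b
    by (intro integrable_continuous_interval continuous_intros continuous_on_psi)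
  ultimately show ?thesis
    by (simp add: integral_add)
qed

lemma integral_psi_mult_psi_shift:
  assumes "k \<le> m" "m \<le> p"
  shows "integral {-1..1} (\<lambda>x. psi p m x * psi p r x) =
    (-1) ^ k * integral {-1..1} (\<lambda>x. psi p (m - k) x * psi p (r + k) x)"
  using assms(1)
proof (induction k)
  case (Suc k)
  then have "m - k = Suc (m - Suc k)" "m - Suc k < p"
    using assms(2) by simp_all
  then have "integral {-1..1} (\<lambda>x. psi p (m - k) x * psi p (r + k) x)
      = - integral {-1..1} (\<lambda>x. psi p (m - Suc k) x * psi p (r + Suc k) x)"
    by (simp add: integral_psi_Suc_mult_psi)
  with Suc show ?case
    by simp
qed simp

lemma integral_legendre_mult_psi_double:
  "integral {-1..1} (\<lambda>x. legendre p x * psi p (2 * n) x) = 2 * primitive_coeff (int p) (2 * n) n"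
proof -
  define k where "k j = int p - int (2 * n) + 2 * int j" for j
  have k_eq: "k j = int p \<longleftrightarrow> j = n" for j
    unfolding k_def by auto
  \<comment> \<open>k j has the parity of p, so it never meets the reflected index of L_p.\<close>
  have k_neq: "k j \<noteq> - int p - 1" for j
    unfolding k_def by presburger
  have "2 * of_int (k n) + 1 = 2 * real p + 1"
    using k_eq[of n] by simp
  have "integral {-1..1} (\<lambda>x. legendre p x * psi p (2 * n) x)
      = integral {-1..1} (\<lambda>x. \<Sum>j=0..2*n.
          primitive_coeff (int p) (2 * n) j * (2 * of_int (k j) + 1) * (legendre p x * legendre_int (k j) x))"
    by (rule integral_cong) (simp add: psi_eq_primitive_sum primitive_sum_def k_def sum_distrib_left mult_ac)
  also have "\<dots> = (\<Sum>j=0..2*n. primitive_coeff (int p) (2 * n) j * (2 * of_int (k j) + 1) *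
      integral {-1..1} (\<lambda>x. legendre p x * legendre_int (k j) x))"
    by (subst integral_sum) (auto intro!: integrable_continuous_interval continuous_intros
        continuous_on_legendre continuous_on_legendre_int)
  also have "\<dots> = (\<Sum>j=0..2*n. if j = n then 2 * primitive_coeff (int p) (2 * n) n else 0)"
    using \<open>2 * of_int (k n) + 1 = 2 * real p + 1\<close>
    by (intro sum.cong) (simp_all add: integral_legendre_mult_legendre_int k_eq k_neq)
  finally show ?thesis
    by simp
qed

lemma fact_double_eq_prod: "(fact (2 * n) :: real) = 2 ^ n * fact n * (\<Prod>k=1..n. 2 * real k - 1)"
proof (induction n)
  case (Suc n)
  have "(fact (2 * Suc n) :: real) = (2 * real n + 2) * (2 * real n + 1) * fact (2 * n)"
    by (simp add: algebra_simps)
  with Suc.IH show ?case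
    by (simp add: prod.nat_ivl_Suc' algebra_simps)
qed simp

lemma central_binomial_eq_prod: "real (2 * n choose n) = 2 ^ n / fact n * (\<Prod>k=1..n. 2 * real k - 1)"
proof -
  have "real (2 * n choose n) = fact (2 * n) / (fact n * fact n)"
    using binomial_fact[of n "2 * n"] by simp
  then show ?thesis
    by (simp add: fact_double_eq_prod)
qed

lemma odd_prod_centered:
  "odd_prod (q - int n) (2 * n) =
    (2 * of_int q + 1) * (\<Prod>k=1..n. (2 * of_int q + 1)\<^sup>2 - 4 * (real k)\<^sup>2)"
proof (induction n)
  case (Suc n)
  have "odd_prod (q - int (Suc n)) (2 * Suc n) = odd_prod ((q - int n) - 1) (Suc (Suc (2 * n)))"
    by (simp add: algebra_simps)
  also have "\<dots> = (2 * of_int (q - int n - 1) + 1) * odd_prod (q - int n) (Suc (2 * n))"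
    by (rule odd_prod_Suc_shift)
  also have "\<dots> = (2 * of_int (q - int n - 1) + 1) * odd_prod (q - int n) (2 * n)
      * (2 * of_int (q - int n + int (2 * n) + 1) + 1)"
    by (simp only: odd_prod_Suc mult.assoc)
  also have "\<dots> = odd_prod (q - int n) (2 * n) * ((2 * of_int q + 1)\<^sup>2 - 4 * (real (Suc n))\<^sup>2)"
    by (simp add: algebra_simps power2_eq_square)
  also have "\<dots> = (2 * of_int q + 1) * (\<Prod>k=1..Suc n. (2 * of_int q + 1)\<^sup>2 - 4 * (real k)\<^sup>2)"
    by (simp add: Suc.IH prod.nat_ivl_Suc' del: of_nat_Suc)
  finally show ?case .
qed (simp add: odd_prod_def)

theorem lemma4:
  fixes n p :: nat
  assumes "p \<ge> n"
  shows "integral {-1..1} (\<lambda>x. (psi p n x)^2) =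
    2 ^ (n + 1) / fact n * (1 / (2 * real p + 1)) *
    (\<Prod>k = 1..n. (2 * real k - 1) / ((2 * real p + 1)^2 - 4 * (real k)^2))"
proof -
  have "integral {-1..1} (\<lambda>x. (psi p n x)^2)
      = (-1) ^ n * integral {-1..1} (\<lambda>x. psi p 0 x * psi p (2 * n) x)"
    using integral_psi_mult_psi_shift[of n n p n] assms by (simp add: power2_eq_square mult_2)
  also have "\<dots> = 2 * real (2 * n choose n) / odd_prod (int p - int n) (2 * n)"
    by (simp add: integral_legendre_mult_psi_double primitive_coeff_def flip: power_add mult_2)
  also have "\<dots> = 2 ^ (n + 1) / fact n * (1 / (2 * real p + 1)) *
    (\<Prod>k = 1..n. (2 * real k - 1) / ((2 * real p + 1)^2 - 4 * (real k)^2))"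
    by (simp add: central_binomial_eq_prod odd_prod_centered prod_dividef)
  finally show ?thesis .
qed

end
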